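(* Let $\alpha,\beta,\gamma\in\mathbb R$ with $\gamma>0$ and $\alpha\beta>0$. Then $z\mapsto F(\alpha,\beta;\gamma;z)-1$ is strictly increasing on $[0,1)$.
   Context: $F(\alpha,\beta;\gamma;z)=\sum_{n=0}^{\infty}\frac{(\alpha)_n(\beta)_n}{(\gamma)_n\,n!}z^n$ for $|z|<1$ is the Gauss hypergeometric function, where $(x)_n=x(x+1)\cdots(x+n-1)$ and $(x)_0=1$ (defined for $\gamma\notin\mathbb Z_{\le0}$). *)

theory Defs
  imports "HOL-Analysis.Analysis"
begin

text \<open>Gauss hypergeometric function F(a,b;c;z), defined by its power series
  (meaningful for |z| < 1 and c not a non-positive integer).\<close>
definition hyp2F1 :: "real \<Rightarrow> real \<Rightarrow> real \<Rightarrow> real \<Rightarrow> real" where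
  "hyp2F1 a b c z =
     (\<Sum>n. (pochhammer a n * pochhammer b n) / (pochhammer c n * fact n) * z ^ n)"

end

theory Submission
  imports Defs "HOL-Real_Asymp.Real_Asymp"
begin

text \<open>The derivative of \<open>F(a,b;c;z)\<close> is \<open>(a b / c) F(a+1,b+1;c+1;z)\<close>, and \<open>a b / c > 0\<close>,
  so it suffices that \<open>F(a,b;c;z) > 0\<close> on \<open>[0,1)\<close> whenever \<open>c \<ge> 1\<close> and \<open>a, b < c\<close>.
  For \<open>a, b \<ge> 0\<close> all coefficients are nonnegative. Otherwise, say \<open>b < 0\<close>, the contiguous relation
  \<open>F(a,b;c;z) = (1-z) F(a,b+1;c;z) + ((c-a) z / c) F(a,b+1;c+1;z)\<close> has nonnegative weights
  and raises \<open>b\<close> by one, so induction on \<open>\<lceil>-a\<rceil> + \<lceil>-b\<rceil>\<close> closes the argument.\<close>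

definition hyp2F1_coeff :: "real \<Rightarrow> real \<Rightarrow> real \<Rightarrow> nat \<Rightarrow> real" where
  "hyp2F1_coeff a b c n = pochhammer a n * pochhammer b n / (pochhammer c n * fact n)"

lemma hyp2F1_eq_suminf: "hyp2F1 a b c z = (\<Sum>n. hyp2F1_coeff a b c n * z ^ n)"
  by (simp add: hyp2F1_def hyp2F1_coeff_def)

lemma hyp2F1_commute: "hyp2F1 a b c z = hyp2F1 b a c z"
  by (simp add: hyp2F1_def mult.commute)

lemma hyp2F1_coeff_0 [simp]: "hyp2F1_coeff a b c 0 = 1"
  by (simp add: hyp2F1_coeff_def)

text \<open>This recurrence, and with it summability and termwise differentiation, needs no hypothesis
  on \<open>c\<close>: if some \<open>c + k = 0\<close>, both sides vanish because \<open>x / 0 = 0\<close>.\<close>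

lemma hyp2F1_coeff_Suc:
  "hyp2F1_coeff a b c (Suc n) = hyp2F1_coeff a b c n * ((a + n) * (b + n) / ((c + n) * (real n + 1)))"
  by (simp add: hyp2F1_coeff_def pochhammer_Suc fact_Suc field_simps)

lemma summable_hyp2F1_series:
  assumes "\<bar>z\<bar> < 1"
  shows "summable (\<lambda>n. hyp2F1_coeff a b c n * z ^ n)"
proof -
  define q where "q n = (a + n) * (b + n) / ((c + n) * (real n + 1)) * z" for n :: nat
  define r where "r = (1 + \<bar>z\<bar>) / 2"
  have "(\<lambda>n. (a + n) * (b + n) / ((c + n) * (real n + 1))) \<longlonglongrightarrow> 1"
    by real_asymp
  then have "(\<lambda>n. \<bar>q n\<bar>) \<longlonglongrightarrow> \<bar>1 * z\<bar>"
    unfolding q_def by (intro tendsto_intros)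
  moreover have "\<bar>1 * z\<bar> < r" using assms by (simp add: r_def)
  ultimately have "eventually (\<lambda>n. \<bar>q n\<bar> < r) sequentially"
    by (rule order_tendstoD(2))
  then obtain N where N: "\<And>n. n \<ge> N \<Longrightarrow> \<bar>q n\<bar> < r"
    by (auto simp: eventually_sequentially)
  show ?thesis
  proof (rule summable_ratio_test)
    show "r < 1" using assms by (simp add: r_def)
    fix n assume "n \<ge> N"
    have "hyp2F1_coeff a b c (Suc n) * z ^ Suc n = q n * (hyp2F1_coeff a b c n * z ^ n)"
      by (simp add: hyp2F1_coeff_Suc q_def)
    then have "norm (hyp2F1_coeff a b c (Suc n) * z ^ Suc n)
        = \<bar>q n\<bar> * norm (hyp2F1_coeff a b c n * z ^ n)"
      by (simp only: real_norm_def abs_mult)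
    also have "\<dots> \<le> r * norm (hyp2F1_coeff a b c n * z ^ n)"
      using N[OF \<open>n \<ge> N\<close>] by (intro mult_right_mono) auto
    finally show "norm (hyp2F1_coeff a b c (Suc n) * z ^ Suc n)
        \<le> r * norm (hyp2F1_coeff a b c n * z ^ n)" .
  qed
qed

lemma diffs_hyp2F1_coeff:
  "diffs (hyp2F1_coeff a b c) n = a * b / c * hyp2F1_coeff (a + 1) (b + 1) (c + 1) n"
proof -
  have "diffs (hyp2F1_coeff a b c) n =
      (a * b * (pochhammer (a + 1) n * pochhammer (b + 1) n)) * (real n + 1)
      / ((c * (pochhammer (c + 1) n * fact n)) * (real n + 1))"
    by (simp add: diffs_def hyp2F1_coeff_def pochhammer_rec fact_Suc algebra_simps)
  then show ?thesis
    by (simp add: hyp2F1_coeff_def)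
qed

lemma has_field_derivative_hyp2F1:
  assumes "\<bar>z\<bar> < 1"
  shows "(hyp2F1 a b c has_field_derivative a * b / c * hyp2F1 (a + 1) (b + 1) (c + 1) z) (at z)"
proof -
  have "((\<lambda>z. \<Sum>n. hyp2F1_coeff a b c n * z ^ n) has_field_derivative
          (\<Sum>n. diffs (hyp2F1_coeff a b c) n * z ^ n)) (at z)"
    using assms summable_hyp2F1_series by (intro termdiffs_strong'[where K = 1]) auto
  moreover have "(\<Sum>n. diffs (hyp2F1_coeff a b c) n * z ^ n)
      = a * b / c * hyp2F1 (a + 1) (b + 1) (c + 1) z"
    unfolding diffs_hyp2F1_coeff hyp2F1_eq_suminf mult.assoc
    using assms summable_hyp2F1_series by (intro suminf_mult)
  ultimately show ?thesis
    by (simp add: hyp2F1_eq_suminf[abs_def])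
qed

lemma hyp2F1_coeff_contiguous:
  assumes "c > 0"
  shows "hyp2F1_coeff a b c (Suc n) = hyp2F1_coeff a (b + 1) c (Suc n) - hyp2F1_coeff a (b + 1) c n
    + (c - a) / c * hyp2F1_coeff a (b + 1) (c + 1) n"
proof -
  define K where "K = hyp2F1_coeff a (b + 1) c n"
  have lowered: "hyp2F1_coeff a b c (Suc n) = K * ((a + n) * b / ((c + n) * (real n + 1)))"
    by (simp add: K_def hyp2F1_coeff_def pochhammer_Suc[of a] pochhammer_Suc[of c]
        pochhammer_rec[of b] fact_Suc field_simps)
  have shifted: "hyp2F1_coeff a (b + 1) c (Suc n) = K * ((a + n) * (b + 1 + n) / ((c + n) * (real n + 1)))"
    by (simp add: K_def hyp2F1_coeff_Suc add_ac)
  have "pochhammer (c + 1) n = pochhammer c n * (c + n) / c"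
    using assms pochhammer_rec[of c n] pochhammer_Suc[of c n] by (simp add: field_simps)
  then have raised: "hyp2F1_coeff a (b + 1) (c + 1) n = K * (c / (c + n))"
    by (simp add: K_def hyp2F1_coeff_def)
  have "c + n \<noteq> 0" "real n + 1 \<noteq> 0" "c \<noteq> 0" using assms by auto
  then have ratio: "(a + n) * b / ((c + n) * (real n + 1))
      = (a + n) * (b + 1 + n) / ((c + n) * (real n + 1)) - 1 + (c - a) / c * (c / (c + n))"
    by (simp add: divide_simps) (simp add: algebra_simps)
  show ?thesis
    unfolding lowered shifted raised K_def[symmetric] ratio by (simp add: algebra_simps)
qed

lemma hyp2F1_contiguous:
  assumes "c > 0" "\<bar>z\<bar> < 1"
  shows "hyp2F1 a b c z
    = (1 - z) * hyp2F1 a (b + 1) c z + (c - a) * z / c * hyp2F1 a (b + 1) (c + 1) z"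
proof -
  define u where "u n = hyp2F1_coeff a (b + 1) c n * z ^ n" for n
  define v where "v n = hyp2F1_coeff a (b + 1) (c + 1) n * z ^ n" for n
  have u: "u sums hyp2F1 a (b + 1) c z" and v: "v sums hyp2F1 a (b + 1) (c + 1) z"
    unfolding u_def v_def hyp2F1_eq_suminf using assms(2) summable_hyp2F1_series
    by (blast intro: summable_sums)+
  have u_Suc: "(\<lambda>n. u (Suc n)) sums (hyp2F1 a (b + 1) c z - 1)"
    using u by (subst sums_Suc_iff) (simp add: u_def)
  have "(\<lambda>n. u (Suc n) - z * u n + (c - a) * z / c * v n) sums
      (hyp2F1 a (b + 1) c z - 1 - z * hyp2F1 a (b + 1) c z + (c - a) * z / c * hyp2F1 a (b + 1) (c + 1) z)"
    by (rule sums_add[OF sums_diff[OF u_Suc sums_mult[OF u]] sums_mult[OF v]])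
  moreover have "u (Suc n) - z * u n + (c - a) * z / c * v n
      = hyp2F1_coeff a b c (Suc n) * z ^ Suc n" for n
    unfolding u_def v_def hyp2F1_coeff_contiguous[OF assms(1), of a b n] by (simp add: algebra_simps)
  ultimately have "(\<lambda>n. hyp2F1_coeff a b c (Suc n) * z ^ Suc n) sums
      (hyp2F1 a (b + 1) c z - 1 - z * hyp2F1 a (b + 1) c z + (c - a) * z / c * hyp2F1 a (b + 1) (c + 1) z)"
    by simp
  then have "(\<lambda>n. hyp2F1_coeff a b c n * z ^ n) sums
      (hyp2F1 a (b + 1) c z - 1 - z * hyp2F1 a (b + 1) c z + (c - a) * z / c * hyp2F1 a (b + 1) (c + 1) z + 1)"
    by (subst (asm) sums_Suc_iff) simp
  then show ?thesis
    unfolding hyp2F1_eq_suminf[of a b c] by (simp add: sums_iff algebra_simps)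
qed

lemma hyp2F1_pos_of_nonneg:
  assumes "0 \<le> a" "0 \<le> b" "0 < c" "0 \<le> z" "z < 1"
  shows "0 < hyp2F1 a b c z"
  unfolding hyp2F1_eq_suminf
proof (rule suminf_pos2[of _ 0])
  show "summable (\<lambda>n. hyp2F1_coeff a b c n * z ^ n)"
    using assms by (intro summable_hyp2F1_series) simp
  have "0 \<le> pochhammer x n" if "0 \<le> x" for x :: real and n
    using that by (induction n) (simp_all add: pochhammer_Suc)
  then show "0 \<le> hyp2F1_coeff a b c n * z ^ n" for n
    using assms pochhammer_pos[of c n] by (simp add: hyp2F1_coeff_def)
qed simp

lemma hyp2F1_pos_of_raised_pos:
  assumes "0 < c" "a < c" "0 \<le> z" "z < 1"
    and "0 < hyp2F1 a (b + 1) c z" "0 < hyp2F1 a (b + 1) (c + 1) z"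
  shows "0 < hyp2F1 a b c z"
proof -
  have "0 < (1 - z) * hyp2F1 a (b + 1) c z" using assms by simp
  moreover have "0 \<le> (c - a) * z / c * hyp2F1 a (b + 1) (c + 1) z" using assms by simp
  moreover have "hyp2F1 a b c z
      = (1 - z) * hyp2F1 a (b + 1) c z + (c - a) * z / c * hyp2F1 a (b + 1) (c + 1) z"
    using assms by (intro hyp2F1_contiguous) auto
  ultimately show ?thesis
    by linarith
qed

lemma hyp2F1_pos:
  assumes "1 \<le> c" "a < c" "b < c" "0 \<le> z" "z < 1"
  shows "0 < hyp2F1 a b c z"
  using assms(1-3)
proof (induction "nat \<lceil>-a\<rceil> + nat \<lceil>-b\<rceil>" arbitrary: a b c rule: less_induct)
  case less
  have decrease: "nat \<lceil>-(x + 1)\<rceil> < nat \<lceil>-x\<rceil>" if "x < 0" for x :: real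
  proof -
    have "-(x + 1) = -x - 1" by simp
    then have "\<lceil>-(x + 1)\<rceil> = \<lceil>-x\<rceil> - 1" by simp
    moreover have "0 < \<lceil>-x\<rceil>" using that by simp
    ultimately show ?thesis by simp
  qed
  consider "b < 0" | "a < 0" | "0 \<le> a" "0 \<le> b" by linarith
  then show ?case
  proof cases
    case 1
    have "0 < hyp2F1 a (b + 1) c' z" if "c' \<in> {c, c + 1}" for c'
      using less.prems decrease[of b] 1 that by (intro less.hyps) auto
    then show ?thesis
      using less.prems assms(4,5) by (intro hyp2F1_pos_of_raised_pos[where b = b]) auto
  next
    case 2
    have "0 < hyp2F1 b (a + 1) c' z" if "c' \<in> {c, c + 1}" for c'
      using less.prems decrease[of a] 2 that by (intro less.hyps) auto
    then have "0 < hyp2F1 b a c z"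
      using less.prems assms(4,5) by (intro hyp2F1_pos_of_raised_pos[where b = a]) auto
    then show ?thesis
      by (simp add: hyp2F1_commute)
  next
    case 3
    then show ?thesis
      using less.prems assms(4,5) by (intro hyp2F1_pos_of_nonneg) auto
  qed
qed

theorem corollary4p6:
  fixes \<alpha> \<beta> \<gamma> :: real
  assumes "\<gamma> > 0" and "\<alpha> * \<beta> > 0"
  shows "strict_mono_on {0..<1} (\<lambda>z. hyp2F1 \<alpha> \<beta> \<gamma> z - 1)"
proof (rule strict_mono_onI)
  have raised_pos: "0 < hyp2F1 (\<alpha> + 1) (\<beta> + 1) (\<gamma> + 1) t" if "0 \<le> t" "t < 1" for t
  proof (cases "\<alpha> > 0")
    case True
    with assms(2) have "\<beta> > 0" by (simp add: zero_less_mult_iff)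
    with True that assms(1) show ?thesis by (intro hyp2F1_pos_of_nonneg) auto
  next
    case False
    with assms(2) have "\<alpha> < 0" "\<beta> < 0" by (auto simp: zero_less_mult_iff)
    with that assms(1) show ?thesis by (intro hyp2F1_pos) auto
  qed
  fix x y :: real assume "x \<in> {0..<1}" "y \<in> {0..<1}" "x < y"
  have "hyp2F1 \<alpha> \<beta> \<gamma> x < hyp2F1 \<alpha> \<beta> \<gamma> y"
  proof (rule DERIV_pos_imp_increasing[OF \<open>x < y\<close>])
    fix t assume "x \<le> t" "t \<le> y"
    with \<open>x \<in> {0..<1}\<close> \<open>y \<in> {0..<1}\<close> have "0 \<le> t" "t < 1" by auto
    then show "\<exists>d. DERIV (hyp2F1 \<alpha> \<beta> \<gamma>) t :> d \<and> 0 < d"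
      using has_field_derivative_hyp2F1[of t \<alpha> \<beta> \<gamma>] raised_pos[of t] assms by auto
  qed
  then show "hyp2F1 \<alpha> \<beta> \<gamma> x - 1 < hyp2F1 \<alpha> \<beta> \<gamma> y - 1"
    by simp
qed

end
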